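(* Let $((x_n,y_n,z_n,t_n))_n$ be an optimal F sequence with $z_0,t_0\neq0$, such that $(z_n)$ converges to a nonzero limit $z_\infty$, and suppose there are constants $C>1$, $\epsilon>0$ and $n_0$ with $|x_n|,|y_n|,|z_n|,|t_n|\le C$ for all $n$ and $|x_n|,|y_n|,|z_n|,|t_n|\ge\epsilon$ for all $n\ge n_0$. Let $\lambda_n=(x_n/z_\infty)^{2^n}\,z_\infty$. Then $(\lambda_n)$ converges to a limit $\lambda$. Moreover there is a constant $c_1>0$, depending on $C$, $\epsilon$ and $|\lambda|$, such that for all sufficiently large $P$: if $k$ is the first integer with $|z_k-t_k|\le 2^{-P-k-c_1}$, then $|\lambda_{k+1}-\lambda|\le 2^{-P}$.
   Context: Optimal F sequence: given $(x_0,y_0,z_0,t_0)\in\mathbb{C}^4$, define recursively $$(x_{n+1},y_{n+1},z_{n+1},t_{n+1})=\Big(\tfrac{\sqrt{x_n}\sqrt{z_n}+\sqrt{y_n}\sqrt{t_n}}{2},\ \tfrac{\sqrt{x_n}\sqrt{t_n}+\sqrt{y_n}\sqrt{z_n}}{2},\ \tfrac{z_n+t_n}{2},\ \sqrt{z_n}\sqrt{t_n}\Big),$$ with square roots chosen "good": $\Re\sqrt{x_n}\ge0$, $\Re\sqrt{z_n}\ge0$; either $|\sqrt{x_n}-\sqrt{y_n}|<|\sqrt{x_n}+\sqrt{y_n}|$ or equality and $\Im(\sqrt{y_n}/\sqrt{x_n})>0$; either $|\sqrt{z_n}-\sqrt{t_n}|<|\sqrt{z_n}+\sqrt{t_n}|$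 or equality and $\Im(\sqrt{t_n}/\sqrt{z_n})>0$. *)

theory Defs
  imports "HOL-Analysis.Analysis"
begin

definition good_roots ::
  "complex \<Rightarrow> complex \<Rightarrow> complex \<Rightarrow> complex \<Rightarrow>
   complex \<Rightarrow> complex \<Rightarrow> complex \<Rightarrow> complex \<Rightarrow> bool" where
  "good_roots x y z t a b c d \<longleftrightarrow>
     a\<^sup>2 = x \<and> b\<^sup>2 = y \<and> c\<^sup>2 = z \<and> d\<^sup>2 = t \<and>
     Re a \<ge> 0 \<and> Re c \<ge> 0 \<and>
     (cmod (a - b) < cmod (a + b) \<or> (cmod (a - b) = cmod (a + b) \<and> Im (b / a) > 0)) \<and>
     (cmod (c - d) < cmod (c + d) \<or> (cmod (c - d) = cmod (c + d) \<and> Im (d / c) > 0))"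

definition optimal_F_seq ::
  "(nat \<Rightarrow> complex) \<Rightarrow> (nat \<Rightarrow> complex) \<Rightarrow> (nat \<Rightarrow> complex) \<Rightarrow> (nat \<Rightarrow> complex) \<Rightarrow> bool" where
  "optimal_F_seq x y z t \<longleftrightarrow>
     (\<forall>n. \<exists>a b c d. good_roots (x n) (y n) (z n) (t n) a b c d \<and>
        x (Suc n) = (a * c + b * d) / 2 \<and>
        y (Suc n) = (a * d + b * c) / 2 \<and>
        z (Suc n) = (z n + t n) / 2 \<and>
        t (Suc n) = c * d)"

definition F_hyps ::
  "(nat \<Rightarrow> complex) \<Rightarrow> (nat \<Rightarrow> complex) \<Rightarrow> (nat \<Rightarrow> complex) \<Rightarrow> (nat \<Rightarrow> complex)
   \<Rightarrow> complex \<Rightarrow> real \<Rightarrow> real \<Rightarrow> nat \<Rightarrow> bool" where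
  "F_hyps x y z t zinf C \<epsilon> n0 \<longleftrightarrow>
     optimal_F_seq x y z t \<and> z 0 \<noteq> 0 \<and> t 0 \<noteq> 0 \<and>
     z \<longlonglongrightarrow> zinf \<and> zinf \<noteq> 0 \<and> C > 1 \<and> \<epsilon> > 0 \<and>
     (\<forall>n. cmod (x n) \<le> C \<and> cmod (y n) \<le> C \<and> cmod (z n) \<le> C \<and> cmod (t n) \<le> C) \<and>
     (\<forall>n\<ge>n0. cmod (x n) \<ge> \<epsilon> \<and> cmod (y n) \<ge> \<epsilon> \<and> cmod (z n) \<ge> \<epsilon> \<and> cmod (t n) \<ge> \<epsilon>)"

definition lam_seq :: "(nat \<Rightarrow> complex) \<Rightarrow> complex \<Rightarrow> nat \<Rightarrow> complex" where
  "lam_seq x zinf n = (x n / zinf) ^ (2 ^ n) * zinf"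

end

theory Submission
  imports Defs
begin

(* For good square roots, z(n+1) - t(n+1) = (c - d)^2/2 and x(n+1) - y(n+1) = (a - b)(c - d)/2,
   while |c + d| and |a + b| stay bounded below by sqrt(2 eps). Hence g n = |c - d| converges
   quadratically to 0, s n = |a - b| + |c - d| satisfies s(n+1) <= kappa g n s n, and
   beta n = 2^n s n eventually halves at each step. Since (a c)^2 = x z, the quotient
   lam(n+1) / lam n is (1 + w n)^(2^n) with |w n| = O(s n), so lam is an absolutely convergent
   infinite product, and its tail beyond k+1 is O(beta(k+1)) = O(g k beta k), which is eventually
   at most |z k - t k|. *)

lemma parallelogram_law:
  fixes u v :: "'a::real_inner"
  shows "norm (u + v) ^ 2 + norm (u - v) ^ 2 = 2 * (norm u ^ 2 + norm v ^ 2)"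
  by (simp add: power2_norm_eq_inner inner_add inner_diff inner_commute)

lemma norm_one_plus_power_minus_one_le:
  fixes w :: "'a::real_normed_algebra_1"
  shows "norm ((1 + w) ^ N - 1) \<le> (1 + norm w) ^ N - 1"
proof (induction N)
  case (Suc N)
  have "norm ((1 + w) ^ Suc N - 1) = norm ((1 + w) * ((1 + w) ^ N - 1) + w)"
    by (simp add: algebra_simps)
  also have "\<dots> \<le> norm (1 + w) * norm ((1 + w) ^ N - 1) + norm w"
    by (metis norm_mult_ineq norm_triangle_ineq add_right_mono order_trans)
  also have "\<dots> \<le> (1 + norm w) * ((1 + norm w) ^ N - 1) + norm w"
    using norm_triangle_ineq[of 1 w] by (intro add_mono mult_mono Suc.IH) auto
  also have "\<dots> = (1 + norm w) ^ Suc N - 1"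
    by (simp add: algebra_simps)
  finally show ?case .
qed simp

lemma one_plus_power_minus_one_le:
  fixes u :: real
  assumes "0 \<le> u" "real N * u \<le> 1"
  shows "(1 + u) ^ N - 1 \<le> 2 * (real N * u)"
proof -
  have "(1 + u) ^ N \<le> exp u ^ N"
    using assms(1) by (intro power_mono) (auto simp: exp_ge_add_one_self)
  also have "\<dots> = exp (real N * u)"
    by (simp add: exp_of_nat_mult)
  also have "\<dots> \<le> 1 + real N * u + (real N * u) ^ 2"
    using assms by (intro exp_bound) auto
  also have "(real N * u) ^ 2 \<le> real N * u"
    using assms by (simp add: power2_eq_square mult_right_le_one_le)
  finally show ?thesis by linarith
qed

lemma norm_lim_minus_le_of_telescoping:
  fixes f :: "nat \<Rightarrow> 'a::real_normed_vector"
  assumes "f \<longlonglongrightarrow> l"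
    and step: "\<And>m. m \<ge> n \<Longrightarrow> norm (f (Suc m) - f m) \<le> v m - v (Suc m)"
    and "\<And>m. v m \<ge> 0"
  shows "norm (l - f n) \<le> v n"
proof -
  have partial: "norm (f m - f n) \<le> v n - v m" if "m \<ge> n" for m
    using that
  proof (induction m rule: dec_induct)
    case (step m)
    have "norm (f (Suc m) - f n) \<le> norm (f m - f n) + norm (f (Suc m) - f m)"
      using norm_triangle_ineq[of "f m - f n" "f (Suc m) - f m"] by simp
    with step.IH assms(2)[OF step.hyps(1)] show ?case by linarith
  qed simp
  have "(\<lambda>m. norm (f m - f n)) \<longlonglongrightarrow> norm (l - f n)"
    by (intro tendsto_intros assms(1))
  moreover have "eventually (\<lambda>m. norm (f m - f n) \<le> v n) sequentially"
    using eventually_ge_at_top[of n]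
  proof eventually_elim
    case (elim m)
    with partial[of m] assms(3)[of m] show ?case by linarith
  qed
  ultimately show ?thesis
    by (rule tendsto_upperbound) simp
qed

lemma ex_pos_lower_bound_if_eventually_ge:
  fixes f :: "nat \<Rightarrow> real"
  assumes "\<And>n. f n > 0" "\<And>n. n \<ge> n0 \<Longrightarrow> \<epsilon> \<le> f n" "\<epsilon> > 0"
  shows "\<exists>\<delta>>0. \<forall>n. \<delta> \<le> f n"
proof -
  let ?\<delta> = "Min (insert \<epsilon> (f ` {..<n0}))"
  have "?\<delta> \<le> f n" for n
    using assms(2)[of n] by (cases "n < n0") (auto simp: Min_le_iff)
  moreover have "?\<delta> > 0"
    using assms(1,3) by simp
  ultimately show ?thesis by blast
qed

lemma ex_powr_below_pos_values:
  fixes f :: "nat \<Rightarrow> real"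
  shows "\<exists>P0::nat. \<forall>j<M. f j > 0 \<longrightarrow> 2 powr - real P0 < f j"
proof -
  define m where "m = Min (insert 1 (f ` {j. j < M \<and> f j > 0}))"
  have m_le: "m \<le> f j" if "j < M" "f j > 0" for j
    unfolding m_def using that by (intro Min_le) auto
  have "m > 0"
    unfolding m_def by (subst Min_gr_iff) auto
  then obtain P0 where "(1/2) ^ P0 < m"
    using real_arch_pow_inv[of m "1/2"] by auto
  moreover have "(1/2::real) ^ P0 = 2 powr - real P0"
    by (simp add: powr_minus powr_realpow power_one_over inverse_eq_divide)
  ultimately show ?thesis
    using m_le by (metis order_less_le_trans)
qed

lemma norm_root_le_sqrt:
  fixes r :: "'a::real_normed_div_algebra"
  assumes "norm (r ^ 2) \<le> C"
  shows "norm r \<le> sqrt C"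
  using assms by (simp add: norm_power real_le_rsqrt)

lemma sqrt_two_mul_le_norm_add:
  fixes r q :: complex
  assumes "cmod (r - q) \<le> cmod (r + q)" "\<epsilon> \<le> cmod (r ^ 2)" "\<epsilon> \<le> cmod (q ^ 2)"
  shows "sqrt (2 * \<epsilon>) \<le> cmod (r + q)"
proof -
  have "cmod (r - q) ^ 2 \<le> cmod (r + q) ^ 2"
    using assms(1) by (simp add: power_mono)
  moreover have "cmod (r ^ 2) = cmod r ^ 2" "cmod (q ^ 2) = cmod q ^ 2"
    by (simp_all add: norm_power)
  ultimately have "2 * \<epsilon> \<le> cmod (r + q) ^ 2"
    using parallelogram_law[of r q] assms(2,3) by (smt (verit))
  then show ?thesis
    by (simp add: real_le_lsqrt)
qed

locale bounded_optimal_F =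
  fixes x y z t :: "nat \<Rightarrow> complex" and zinf :: complex and C \<epsilon> :: real
    and a b c d :: "nat \<Rightarrow> complex"
  assumes roots: "\<And>n. good_roots (x n) (y n) (z n) (t n) (a n) (b n) (c n) (d n)"
    and x_Suc: "\<And>n. x (Suc n) = (a n * c n + b n * d n) / 2"
    and y_Suc: "\<And>n. y (Suc n) = (a n * d n + b n * c n) / 2"
    and z_Suc: "\<And>n. z (Suc n) = (z n + t n) / 2"
    and t_Suc: "\<And>n. t (Suc n) = c n * d n"
    and z_lim: "z \<longlonglongrightarrow> zinf" and zinf_nonzero: "zinf \<noteq> 0"
    and upper: "\<And>n. cmod (x n) \<le> C \<and> cmod (y n) \<le> C \<and> cmod (z n) \<le> C \<and> cmod (t n) \<le> C"
    and \<epsilon>_pos: "\<epsilon> > 0"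
    and lower: "\<And>n. \<epsilon> \<le> cmod (x n) \<and> \<epsilon> \<le> cmod (y n) \<and> \<epsilon> \<le> cmod (z n) \<and> \<epsilon> \<le> cmod (t n)"
begin

abbreviation lam :: "nat \<Rightarrow> complex" where
  "lam \<equiv> lam_seq x zinf"

definition e :: "nat \<Rightarrow> real" where "e n = cmod (z n - t n)"
definition g :: "nat \<Rightarrow> real" where "g n = cmod (c n - d n)"
definition h :: "nat \<Rightarrow> real" where "h n = cmod (a n - b n)"
definition s :: "nat \<Rightarrow> real" where "s n = h n + g n"
definition \<beta> :: "nat \<Rightarrow> real" where "\<beta> n = 2 ^ n * s n"
definition w :: "nat \<Rightarrow> complex" where "w n = x (Suc n) ^ 2 / (x n * zinf) - 1"
definition \<kappa> :: real where "\<kappa> = 1 / (2 * sqrt (2 * \<epsilon>))"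
definition K :: real where "K = 3 * C * sqrt C / (\<epsilon> * cmod zinf)"

lemma roots_sq: "a n ^ 2 = x n" "b n ^ 2 = y n" "c n ^ 2 = z n" "d n ^ 2 = t n"
  using roots[of n] by (auto simp: good_roots_def)

lemma roots_good: "cmod (a n - b n) \<le> cmod (a n + b n)" "cmod (c n - d n) \<le> cmod (c n + d n)"
  using roots[of n] by (auto simp: good_roots_def)

lemma C_pos: "C > 0"
  using upper[of 0] lower[of 0] \<epsilon>_pos by linarith

lemma sqrt_2\<epsilon>_pos: "sqrt (2 * \<epsilon>) > 0"
  using \<epsilon>_pos by simp

lemma norm_roots_le: "cmod (a n) \<le> sqrt C" "cmod (b n) \<le> sqrt C" "cmod (c n) \<le> sqrt C" "cmod (d n) \<le> sqrt C"
  using upper[of n] by (auto intro!: norm_root_le_sqrt simp: roots_sq)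

lemma sqrt_2\<epsilon>_le_norm_add_roots: "sqrt (2 * \<epsilon>) \<le> cmod (a n + b n)" "sqrt (2 * \<epsilon>) \<le> cmod (c n + d n)"
  using lower[of n] roots_good[of n] by (auto intro!: sqrt_two_mul_le_norm_add simp: roots_sq)

lemma e_nonneg: "e n \<ge> 0" and g_nonneg: "g n \<ge> 0" and h_nonneg: "h n \<ge> 0"
  and s_nonneg: "s n \<ge> 0" and \<beta>_nonneg: "\<beta> n \<ge> 0"
  by (simp_all add: e_def g_def h_def s_def \<beta>_def)

lemma \<kappa>_pos: "\<kappa> > 0"
  using sqrt_2\<epsilon>_pos by (simp add: \<kappa>_def)

lemma K_pos: "K > 0"
  using C_pos \<epsilon>_pos zinf_nonzero by (simp add: K_def)

lemma x_nonzero: "x n \<noteq> 0"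
  using lower[of n] \<epsilon>_pos by auto

lemma e_eq: "e n = g n * cmod (c n + d n)"
proof -
  have "z n - t n = (c n - d n) * (c n + d n)"
    by (simp add: roots_sq[symmetric] algebra_simps power2_eq_square)
  then show ?thesis by (simp add: e_def g_def norm_mult)
qed

lemma norm_x_minus_y_eq: "cmod (x n - y n) = h n * cmod (a n + b n)"
proof -
  have "x n - y n = (a n - b n) * (a n + b n)"
    by (simp add: roots_sq[symmetric] algebra_simps power2_eq_square)
  then show ?thesis by (simp add: h_def norm_mult)
qed

lemma e_Suc: "e (Suc n) = g n ^ 2 / 2"
proof -
  have "z (Suc n) - t (Suc n) = (c n ^ 2 + d n ^ 2) / 2 - c n * d n"
    by (simp add: z_Suc t_Suc roots_sq)
  also have "\<dots> = (c n - d n) ^ 2 / 2"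
    by (simp add: field_simps power2_eq_square)
  finally show ?thesis
    unfolding e_def g_def by (simp only: norm_divide norm_power) simp
qed

lemma norm_x_minus_y_Suc: "cmod (x (Suc n) - y (Suc n)) = h n * g n / 2"
proof -
  have "x (Suc n) - y (Suc n) = (a n - b n) * (c n - d n) / 2"
    by (simp add: x_Suc y_Suc field_simps)
  then show ?thesis
    unfolding h_def g_def by (simp only: norm_divide norm_mult) simp
qed

lemma g_le: "g n \<le> e n / sqrt (2 * \<epsilon>)"
  using mult_left_mono[OF sqrt_2\<epsilon>_le_norm_add_roots(2) g_nonneg] sqrt_2\<epsilon>_pos
  by (simp add: e_eq field_simps)

lemma h_le: "h n \<le> cmod (x n - y n) / sqrt (2 * \<epsilon>)"
  using mult_left_mono[OF sqrt_2\<epsilon>_le_norm_add_roots(1) h_nonneg] sqrt_2\<epsilon>_pos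
  by (simp add: norm_x_minus_y_eq field_simps)

lemma g_Suc_le: "g (Suc n) \<le> \<kappa> * g n ^ 2"
  using g_le[of "Suc n"] by (simp add: e_Suc \<kappa>_def field_simps)

lemma h_Suc_le: "h (Suc n) \<le> \<kappa> * g n * h n"
  using h_le[of "Suc n"] by (simp add: norm_x_minus_y_Suc \<kappa>_def field_simps)

lemma s_Suc_le: "s (Suc n) \<le> \<kappa> * g n * s n"
  using g_Suc_le[of n] h_Suc_le[of n] by (simp add: s_def power2_eq_square algebra_simps)

lemma \<beta>_Suc_le: "\<beta> (Suc n) \<le> 2 * \<kappa> * g n * \<beta> n"
  using mult_left_mono[OF s_Suc_le[of n], of "2 ^ Suc n"] by (simp add: \<beta>_def algebra_simps)

lemma e_Suc_le_half: "e (Suc n) \<le> e n / 2"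
  using mult_left_mono[OF roots_good(2)[of n] g_nonneg[of n]]
  unfolding e_Suc e_eq[of n] by (simp add: g_def power2_eq_square)

lemma e_tendsto_zero: "e \<longlonglongrightarrow> 0"
proof -
  have "summable e"
    using e_Suc_le_half e_nonneg by (intro summable_ratio_test[of "1/2" 0]) auto
  then show ?thesis by (rule summable_LIMSEQ_zero)
qed

lemma g_tendsto_zero: "g \<longlonglongrightarrow> 0"
proof (rule Lim_null_comparison)
  show "eventually (\<lambda>n. norm (g n) \<le> e n / sqrt (2 * \<epsilon>)) sequentially"
    using g_le g_nonneg by simp
  show "(\<lambda>n. e n / sqrt (2 * \<epsilon>)) \<longlonglongrightarrow> 0"
    using tendsto_divide_zero[OF e_tendsto_zero] by simp
qed

lemma norm_zinf_minus_z_le: "cmod (zinf - z n) \<le> e n"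
proof (rule norm_lim_minus_le_of_telescoping[OF z_lim])
  fix m
  have "cmod (z (Suc m) - z m) = e m / 2"
    by (simp add: e_def z_Suc field_simps norm_divide norm_minus_commute)
  then show "cmod (z (Suc m) - z m) \<le> e m - e (Suc m)"
    using e_Suc_le_half[of m] by simp
qed (rule e_nonneg)

lemma eventually_\<beta>_Suc_le_half: "eventually (\<lambda>n. \<beta> (Suc n) \<le> \<beta> n / 2) sequentially"
proof -
  have "eventually (\<lambda>n. g n < 1 / (4 * \<kappa>)) sequentially"
    using order_tendstoD(2)[OF g_tendsto_zero] \<kappa>_pos by simp
  then show ?thesis
  proof eventually_elim
    case (elim n)
    then have "2 * \<kappa> * g n \<le> 1 / 2"
      using \<kappa>_pos by (simp add: field_simps)
    then show ?case
      using \<beta>_Suc_le[of n] mult_right_mono[OF _ \<beta>_nonneg[of n]] by fastforce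
  qed
qed

lemma summable_\<beta>: "summable \<beta>"
proof -
  obtain N where "\<And>n. n \<ge> N \<Longrightarrow> \<beta> (Suc n) \<le> \<beta> n / 2"
    using eventually_\<beta>_Suc_le_half by (auto simp: eventually_sequentially)
  then show ?thesis
    using \<beta>_nonneg by (intro summable_ratio_test[of "1/2" N]) auto
qed

lemma \<beta>_tendsto_zero: "\<beta> \<longlonglongrightarrow> 0"
  using summable_\<beta> by (rule summable_LIMSEQ_zero)

lemma norm_x_Suc_minus_ac_le: "cmod (x (Suc n) - a n * c n) \<le> sqrt C * s n / 2"
proof -
  have eq: "x (Suc n) - a n * c n = ((b n - a n) * d n + a n * (d n - c n)) / 2"
    by (simp add: x_Suc field_simps)
  have "cmod (x (Suc n) - a n * c n) = cmod ((b n - a n) * d n + a n * (d n - c n)) / 2"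
    unfolding eq by (simp add: norm_divide)
  also have "\<dots> \<le> (cmod (b n - a n) * cmod (d n) + cmod (a n) * cmod (d n - c n)) / 2"
    using norm_triangle_ineq[of "(b n - a n) * d n" "a n * (d n - c n)"]
    by (simp add: norm_mult)
  also have "\<dots> \<le> (h n * sqrt C + sqrt C * g n) / 2"
    using norm_roots_le[of n] C_pos
    by (intro divide_right_mono add_mono mult_mono) (auto simp: h_def g_def norm_minus_commute)
  also have "\<dots> = sqrt C * s n / 2"
    by (simp add: s_def algebra_simps)
  finally show ?thesis .
qed

lemma norm_x_Suc_plus_ac_le: "cmod (x (Suc n) + a n * c n) \<le> 2 * C"
proof -
  have "cmod (x (Suc n) + a n * c n) \<le> cmod (x (Suc n)) + cmod (a n) * cmod (c n)"
    using norm_triangle_ineq[of "x (Suc n)" "a n * c n"] by (simp add: norm_mult)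
  also have "\<dots> \<le> C + sqrt C * sqrt C"
    using upper[of "Suc n"] norm_roots_le[of n] C_pos by (intro add_mono mult_mono) auto
  finally show ?thesis
    using C_pos by simp
qed

lemma norm_z_minus_zinf_le: "cmod (z n - zinf) \<le> 2 * sqrt C * g n"
proof -
  have "cmod (c n + d n) \<le> 2 * sqrt C"
    using norm_roots_le[of n] norm_triangle_ineq[of "c n" "d n"] by linarith
  then have "g n * cmod (c n + d n) \<le> g n * (2 * sqrt C)"
    by (rule mult_left_mono) (rule g_nonneg)
  then show ?thesis
    using norm_zinf_minus_z_le[of n] by (simp add: e_eq norm_minus_commute mult_ac)
qed

lemma norm_x_Suc_sq_minus_le: "cmod (x (Suc n) ^ 2 - x n * zinf) \<le> 3 * C * sqrt C * s n"
proof -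
  have split: "x (Suc n) ^ 2 - x n * zinf
      = (x (Suc n) - a n * c n) * (x (Suc n) + a n * c n) + x n * (z n - zinf)"
    by (simp add: roots_sq(1,3)[symmetric] algebra_simps power2_eq_square)
  have "cmod (x (Suc n) ^ 2 - x n * zinf)
      \<le> cmod (x (Suc n) - a n * c n) * cmod (x (Suc n) + a n * c n) + cmod (x n) * cmod (z n - zinf)"
    unfolding split
    using norm_triangle_ineq[of "(x (Suc n) - a n * c n) * (x (Suc n) + a n * c n)" "x n * (z n - zinf)"]
    by (simp add: norm_mult)
  also have "\<dots> \<le> (sqrt C * s n / 2) * (2 * C) + C * (2 * sqrt C * g n)"
    using norm_x_Suc_minus_ac_le norm_x_Suc_plus_ac_le norm_z_minus_zinf_le upper[of n]
      s_nonneg[of n] g_nonneg[of n] C_pos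
    by (intro add_mono mult_mono) auto
  also have "\<dots> \<le> 3 * C * sqrt C * s n"
    using C_pos h_nonneg[of n] by (simp add: s_def algebra_simps)
  finally show ?thesis .
qed

lemma norm_w_le: "cmod (w n) \<le> K * s n"
proof -
  have "w n = (x (Suc n) ^ 2 - x n * zinf) / (x n * zinf)"
    using x_nonzero[of n] zinf_nonzero by (simp add: w_def field_simps)
  then have "cmod (w n) = cmod (x (Suc n) ^ 2 - x n * zinf) / (cmod (x n) * cmod zinf)"
    by (simp add: norm_divide norm_mult)
  also have "\<dots> \<le> 3 * C * sqrt C * s n / (\<epsilon> * cmod zinf)"
    using norm_x_Suc_sq_minus_le[of n] lower[of n] \<epsilon>_pos zinf_nonzero C_pos s_nonneg[of n]
    by (intro frac_le mult_mono) auto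
  finally show ?thesis
    by (simp add: K_def)
qed

lemma lam_Suc: "lam (Suc n) = lam n * (1 + w n) ^ 2 ^ n"
proof -
  have ratio: "(x n / zinf) * (x (Suc n) ^ 2 / (x n * zinf)) = (x (Suc n) / zinf) ^ 2"
    using x_nonzero[of n] zinf_nonzero by (simp add: field_simps power2_eq_square)
  have "lam n * (1 + w n) ^ 2 ^ n = (x n / zinf) ^ 2 ^ n * (x (Suc n) ^ 2 / (x n * zinf)) ^ 2 ^ n * zinf"
    by (simp add: lam_seq_def w_def ac_simps)
  also have "\<dots> = ((x (Suc n) / zinf) ^ 2) ^ 2 ^ n * zinf"
    unfolding power_mult_distrib[symmetric] ratio ..
  also have "\<dots> = lam (Suc n)"
    by (simp add: lam_seq_def power_mult[symmetric] mult.commute)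
  finally show ?thesis ..
qed

lemma norm_power_w_minus_one_le:
  assumes "K * \<beta> n \<le> 1"
  shows "cmod ((1 + w n) ^ 2 ^ n - 1) \<le> 2 * K * \<beta> n"
proof -
  have "cmod ((1 + w n) ^ 2 ^ n - 1) \<le> (1 + cmod (w n)) ^ 2 ^ n - 1"
    by (rule norm_one_plus_power_minus_one_le)
  also have "\<dots> \<le> (1 + K * s n) ^ 2 ^ n - 1"
    using norm_w_le[of n] by (simp add: power_mono)
  also have "\<dots> \<le> 2 * (real (2 ^ n) * (K * s n))"
    using assms K_pos s_nonneg[of n]
    by (intro one_plus_power_minus_one_le) (auto simp: \<beta>_def algebra_simps)
  finally show ?thesis
    by (simp add: \<beta>_def algebra_simps)
qed

lemma eventually_K_\<beta>_le_one: "eventually (\<lambda>n. K * \<beta> n \<le> 1) sequentially"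
proof -
  have "eventually (\<lambda>n. K * \<beta> n < 1) sequentially"
    by (rule order_tendstoD(2)[OF tendsto_mult_right_zero[OF \<beta>_tendsto_zero]]) simp
  then show ?thesis
    by (rule eventually_mono) simp
qed

lemma lam_convergent: "convergent lam"
proof -
  define \<rho> where "\<rho> n = (1 + w n) ^ 2 ^ n" for n
  have lam_prod: "lam (Suc n) = lam 0 * (\<Prod>i\<le>n. \<rho> i)" for n
    by (induction n) (simp_all add: lam_Suc \<rho>_def)
  have "eventually (\<lambda>n. norm (norm (\<rho> n - 1)) \<le> 2 * K * \<beta> n) sequentially"
    using eventually_K_\<beta>_le_one by eventually_elim (simp add: \<rho>_def norm_power_w_minus_one_le)
  moreover have "summable (\<lambda>n. 2 * K * \<beta> n)"
    by (intro summable_mult summable_\<beta>)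
  ultimately have "summable (\<lambda>n. norm (\<rho> n - 1))"
    by (rule summable_comparison_test_ev)
  then have "(\<lambda>n. \<Prod>i\<le>n. \<rho> i) \<longlonglongrightarrow> prodinf \<rho>"
    by (rule convergent_prod_LIMSEQ[OF abs_convergent_prod_imp_convergent_prod
        [OF summable_imp_abs_convergent_prod]])
  then have "(\<lambda>n. lam (Suc n)) \<longlonglongrightarrow> lam 0 * prodinf \<rho>"
    unfolding lam_prod by (intro tendsto_intros)
  then show ?thesis
    by (rule convergentI[OF LIMSEQ_imp_Suc])
qed

lemma lam_Suc_eq_limit_if_e_zero:
  assumes "lam \<longlonglongrightarrow> l" "e k = 0"
  shows "lam (Suc k) = l"
proof -
  have "cmod (c k + d k) > 0"
    using sqrt_2\<epsilon>_le_norm_add_roots(2)[of k] sqrt_2\<epsilon>_pos by linarith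
  then have "g k = 0"
    using assms(2) by (simp add: e_eq)
  have \<beta>_zero: "\<beta> n = 0" if "n \<ge> Suc k" for n
    using that
  proof (induction n rule: dec_induct)
    case base
    show ?case using \<beta>_Suc_le[of k] \<beta>_nonneg[of "Suc k"] \<open>g k = 0\<close> by simp
  next
    case (step n)
    show ?case using \<beta>_Suc_le[of n] \<beta>_nonneg[of "Suc n"] step.IH by simp
  qed
  have "cmod (l - lam (Suc k)) \<le> 0"
  proof (rule norm_lim_minus_le_of_telescoping[OF assms(1)])
    fix m
    assume "m \<ge> Suc k"
    then have "w m = 0"
      using norm_w_le[of m] \<beta>_zero[of m] by (simp add: \<beta>_def)
    then show "cmod (lam (Suc m) - lam m) \<le> 0 - 0"
      by (simp add: lam_Suc)
  qed simp
  then show ?thesis by simp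
qed

lemma norm_lim_minus_lam_le:
  assumes "lam \<longlonglongrightarrow> l" and bound: "\<And>m. cmod (lam m) \<le> B"
    and tail: "\<And>m. m \<ge> n \<Longrightarrow> K * \<beta> m \<le> 1 \<and> \<beta> (Suc m) \<le> \<beta> m / 2"
  shows "cmod (l - lam n) \<le> 4 * B * K * \<beta> n"
proof -
  have "B \<ge> 0"
    using bound[of 0] norm_ge_zero order_trans by blast
  show ?thesis
  proof (rule norm_lim_minus_le_of_telescoping[OF assms(1)])
    fix m
    assume "m \<ge> n"
    have "lam (Suc m) - lam m = lam m * ((1 + w m) ^ 2 ^ m - 1)"
      by (simp add: lam_Suc algebra_simps)
    then have "cmod (lam (Suc m) - lam m) = cmod (lam m) * cmod ((1 + w m) ^ 2 ^ m - 1)"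
      by (simp add: norm_mult)
    also have "\<dots> \<le> B * (2 * K * \<beta> m)"
      using bound[of m] norm_power_w_minus_one_le tail[OF \<open>m \<ge> n\<close>] \<open>B \<ge> 0\<close>
      by (intro mult_mono) auto
    also have "\<dots> \<le> 4 * B * K * \<beta> m - 4 * B * K * \<beta> (Suc m)"
      using mult_left_mono[OF conjunct2[OF tail[OF \<open>m \<ge> n\<close>]], of "4 * B * K"] \<open>B \<ge> 0\<close> K_pos
      by simp
    finally show "cmod (lam (Suc m) - lam m) \<le> 4 * B * K * \<beta> m - 4 * B * K * \<beta> (Suc m)" .
  next
    show "\<And>m. 4 * B * K * \<beta> m \<ge> 0"
      using \<open>B \<ge> 0\<close> K_pos \<beta>_nonneg by simp
  qed
qed

lemma eventually_norm_lim_minus_lam_Suc_le: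
  assumes "lam \<longlonglongrightarrow> l"
  shows "eventually (\<lambda>k. cmod (l - lam (Suc k)) \<le> e k) sequentially"
proof -
  obtain B where "B > 0" and B: "\<And>m. cmod (lam m) \<le> B"
    using convergent_imp_Bseq[OF convergentI[OF assms]] by (auto elim: BseqE)
  have "eventually (\<lambda>n. \<forall>m\<ge>n. K * \<beta> m \<le> 1 \<and> \<beta> (Suc m) \<le> \<beta> m / 2) sequentially"
    using eventually_K_\<beta>_le_one eventually_\<beta>_Suc_le_half
    by (intro eventually_all_ge_at_top) (rule eventually_conj)
  moreover have "eventually (\<lambda>n. 8 * B * K * \<kappa> * \<beta> n \<le> sqrt (2 * \<epsilon>)) sequentially"
    using order_tendstoD(2)[OF tendsto_mult_right_zero[OF \<beta>_tendsto_zero, of "8 * B * K * \<kappa>"]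
        sqrt_2\<epsilon>_pos]
    by (rule eventually_mono) simp
  ultimately show ?thesis
  proof eventually_elim
    case (elim k)
    have "cmod (l - lam (Suc k)) \<le> 4 * B * K * \<beta> (Suc k)"
      using elim(1) by (intro norm_lim_minus_lam_le[OF assms B]) auto
    also have "\<dots> \<le> 4 * B * K * (2 * \<kappa> * g k * \<beta> k)"
      using \<beta>_Suc_le[of k] \<open>B > 0\<close> K_pos by (intro mult_left_mono) auto
    also have "\<dots> = (8 * B * K * \<kappa> * \<beta> k) * g k"
      by simp
    also have "\<dots> \<le> sqrt (2 * \<epsilon>) * g k"
      using elim(2) g_nonneg[of k] by (intro mult_right_mono)
    also have "\<dots> \<le> e k"
      using g_le[of k] sqrt_2\<epsilon>_pos by (simp add: field_simps)
    finally show ?case .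
  qed
qed

lemma lam_Suc_close_to_limit:
  assumes "lam \<longlonglongrightarrow> l"
  shows "\<exists>P0::nat. \<forall>P\<ge>P0. \<forall>k. e k \<le> 2 powr - real P \<longrightarrow> cmod (lam (Suc k) - l) \<le> 2 powr - real P"
proof -
  obtain M where M: "\<And>k. k \<ge> M \<Longrightarrow> cmod (l - lam (Suc k)) \<le> e k"
    using eventually_norm_lim_minus_lam_Suc_le[OF assms] by (auto simp: eventually_sequentially)
  obtain P0 :: nat where P0: "\<And>j. j < M \<Longrightarrow> e j > 0 \<Longrightarrow> 2 powr - real P0 < e j"
    using ex_powr_below_pos_values[of M e] by blast
  have "cmod (lam (Suc k) - l) \<le> 2 powr - real P"
    if "P \<ge> P0" and ek: "e k \<le> 2 powr - real P" for P k
  proof (cases "k \<ge> M")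
    case True
    then show ?thesis
      using M[of k] ek by (simp add: norm_minus_commute)
  next
    case False
    have "(2::real) powr - real P \<le> 2 powr - real P0"
      using \<open>P \<ge> P0\<close> by (intro powr_mono) auto
    have "\<not> e k > 0"
    proof
      assume "e k > 0"
      with P0[of k] False have "2 powr - real P0 < e k"
        by simp
      with ek \<open>2 powr - real P \<le> 2 powr - real P0\<close> show False
        by linarith
    qed
    then have "e k = 0"
      using e_nonneg[of k] by simp
    then show ?thesis
      using lam_Suc_eq_limit_if_e_zero[OF assms] by simp
  qed
  then show ?thesis by blast
qed

end

lemma F_hyps_imp_bounded_optimal_F:
  assumes "F_hyps x y z t zinf C \<epsilon> n0"
  shows "\<exists>\<delta> a b c d. bounded_optimal_F x y z t zinf C \<delta> a b c d"
proof -
  from assms have "\<forall>n. \<exists>a b c d. good_roots (x n) (y n) (z n) (t n) a b c d \<and>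
      x (Suc n) = (a * c + b * d) / 2 \<and> y (Suc n) = (a * d + b * c) / 2 \<and>
      z (Suc n) = (z n + t n) / 2 \<and> t (Suc n) = c * d"
    by (simp add: F_hyps_def optimal_F_seq_def)
  then obtain a b c d where roots: "\<And>n. good_roots (x n) (y n) (z n) (t n) (a n) (b n) (c n) (d n) \<and>
      x (Suc n) = (a n * c n + b n * d n) / 2 \<and> y (Suc n) = (a n * d n + b n * c n) / 2 \<and>
      z (Suc n) = (z n + t n) / 2 \<and> t (Suc n) = c n * d n"
    by metis
  \<comment> \<open>good roots force all terms to be nonzero, so the lower bound can be made uniform in \<open>n\<close>\<close>
  define m where "m n = min (min (cmod (x n)) (cmod (y n))) (min (cmod (z n)) (cmod (t n)))" for n
  have "m n > 0" for n
    using roots[of n] by (auto simp: m_def good_roots_def)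
  then obtain \<delta> where "\<delta> > 0" "\<And>n. \<delta> \<le> m n"
    using assms ex_pos_lower_bound_if_eventually_ge[of m n0 \<epsilon>] by (auto simp: F_hyps_def m_def)
  then have "bounded_optimal_F x y z t zinf C \<delta> a b c d"
    using roots assms by unfold_locales (auto simp: F_hyps_def m_def)
  then show ?thesis by blast
qed

theorem mainTheorem11:
  shows "(\<forall>x y z t zinf C \<epsilon> n0. F_hyps x y z t zinf C \<epsilon> n0 \<longrightarrow> convergent (lam_seq x zinf))
   \<and> (\<forall>C \<epsilon> L. C > 1 \<longrightarrow> \<epsilon> > 0 \<longrightarrow>
        (\<exists>c1::real. c1 > 0 \<and>
          (\<forall>x y z t zinf n0 lam. F_hyps x y z t zinf C \<epsilon> n0 \<longrightarrow>
             lam_seq x zinf \<longlonglongrightarrow> lam \<longrightarrow> cmod lam = L \<longrightarrow>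
             (\<exists>P0::nat. \<forall>P\<ge>P0. \<forall>k::nat.
                cmod (z k - t k) \<le> 2 powr (- (real P + real k + c1)) \<longrightarrow>
                (\<forall>j<k. \<not> cmod (z j - t j) \<le> 2 powr (- (real P + real j + c1))) \<longrightarrow>
                cmod (lam_seq x zinf (Suc k) - lam) \<le> 2 powr (- real P)))))"
proof (intro conjI allI impI exI[of _ "1::real"])
  fix x y z t :: "nat \<Rightarrow> complex" and zinf C \<epsilon> n0
  assume "F_hyps x y z t zinf C \<epsilon> n0"
  then show "convergent (lam_seq x zinf)"
    using F_hyps_imp_bounded_optimal_F bounded_optimal_F.lam_convergent by metis
next
  fix x y z t :: "nat \<Rightarrow> complex" and zinf C \<epsilon> n0 l
  assume "F_hyps x y z t zinf C \<epsilon> n0" "lam_seq x zinf \<longlonglongrightarrow> l"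
  then obtain P0 where P0: "\<And>P k. P \<ge> P0 \<Longrightarrow> cmod (z k - t k) \<le> 2 powr - real P \<Longrightarrow>
      cmod (lam_seq x zinf (Suc k) - l) \<le> 2 powr - real P"
    using F_hyps_imp_bounded_optimal_F bounded_optimal_F.lam_Suc_close_to_limit
      bounded_optimal_F.e_def by metis
  have "(2::real) powr - (real P + real k + 1) \<le> 2 powr - real P" for P k :: nat
    by (intro powr_mono) auto
  then show "\<exists>P0::nat. \<forall>P\<ge>P0. \<forall>k::nat.
      cmod (z k - t k) \<le> 2 powr - (real P + real k + 1) \<longrightarrow>
      (\<forall>j<k. \<not> cmod (z j - t j) \<le> 2 powr - (real P + real j + 1)) \<longrightarrow>
      cmod (lam_seq x zinf (Suc k) - l) \<le> 2 powr - real P"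
    using P0 order_trans by blast
qed simp

end
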